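(* For every set $q$ of operations on a set $\Omega$, $\mathrm{Sim}(q)$ is a full monoid, i.e. it is closed under relational composition and converses, contains $\approx_{\mathrm{Sim}(q)}$, and is closed under subsimilarities.
   Context: A similarity on $\Omega$ is a relation $\pi\subseteq\Omega\times\Omega$ such that every $a$ has some $b$ with $a\pi b$ and every $b$ has some $a$ with $a\pi b$; $\bar a\,\pi\,\bar b$ means coordinatewise relatedness; for $R,S\subseteq\Omega^k$, $R\,\pi\,S$ means $\bar a\pi\bar b$ implies ($\bar a\in R\iff\bar b\in S$). A set of operations is a set of finitary relations and quantifiers (subsets of $\mathcal P(\Omega^{k_1})\times\cdots\times\mathcal P(\Omega^{k_l})$) on $\Omega$; $\mathscr L^-_{\infty\infty}(q)$ is the equality-free infinitary logic with predicate and Lindström quantifier symbols for members of $q$. $a\sim_q b$ iff for all formulas $\phi(x,\bar y)$ of $\mathscr L^-_{\infty\infty}(q)$ and tuples $\bar c$ from $\Omega$, $\phi(a,\bar c)\iff\phi(b,\bar c)$. A relation is invariant under a similarity or equivalence relation $\rho$ if $\bar a\rho\bar b$ implies $\bar a\in R\iff\bar b\in R$; a quantifier $Q$ is $\sim$-invariant under $\pi$ if for all $\bar R,\bar S$ of its type with every component invariant under $\sim$ and $R_i\,\pi\,S_i$: $\bar R\in Q\iff\bar S\in Q$. $\mathrm{Sim}(q)$ is the set of similarities under which every relation of $q$ is invariant and every quantifier of $q$ is $\sim_q$-invariant. For a set $\Pi$ of similarities, $a\approx_\Pi b$ iff for every finite $k$ and $\bar c\in\Omega^k$ there is $\pi\in\Pi$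 with $(a,\bar c)\,\pi\,(b,\bar c)$. A subsimilarity of $\pi$ is a similarity $\pi'\subseteq\pi$. *)

theory Defs
  imports Main
begin

text \<open>Tuples from Omega (the universe of type 'a) are represented as lists.
  An operation is either a finitary relation of arity k (a set of k-lists)
  or a Lindstroem quantifier of type (k_1,...,k_l) (a set of l-lists of relations,
  the i-th being a set of k_i-lists).\<close>

datatype 'a operation =
    Rel nat "'a list set"
  | Quant "nat list" "'a list set list set"

definition ops_wf :: "'a operation set \<Rightarrow> bool" where
  "ops_wf q \<longleftrightarrow>
     (\<forall>k R. Rel k R \<in> q \<longrightarrow> R \<subseteq> {as. length as = k}) \<and>
     (\<forall>ks Q. Quant ks Q \<in> q \<longrightarrow>
        Q \<subseteq> {Rs. length Rs = length ks \<and>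
                 (\<forall>i<length ks. Rs ! i \<subseteq> {as. length as = ks ! i})})"

definition similarity :: "('a \<times> 'a) set \<Rightarrow> bool" where
  "similarity \<pi> \<longleftrightarrow> (\<forall>a. \<exists>b. (a, b) \<in> \<pi>) \<and> (\<forall>b. \<exists>a. (a, b) \<in> \<pi>)"

definition rel_sim :: "('a \<Rightarrow> 'a \<Rightarrow> bool) \<Rightarrow> 'a list set \<Rightarrow> 'a list set \<Rightarrow> bool" where
  "rel_sim P R S \<longleftrightarrow> (\<forall>xs ys. list_all2 P xs ys \<longrightarrow> (xs \<in> R \<longleftrightarrow> ys \<in> S))"

definition invariant :: "('a \<Rightarrow> 'a \<Rightarrow> bool) \<Rightarrow> 'a list set \<Rightarrow> bool" where
  "invariant P R \<longleftrightarrow> rel_sim P R R"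

definition upd :: "('v \<Rightarrow> 'a) \<Rightarrow> 'v list \<Rightarrow> 'a list \<Rightarrow> ('v \<Rightarrow> 'a)" where
  "upd s xs as = foldr (\<lambda>(x, a) f. f(x := a)) (zip xs as) s"

text \<open>Semantics of equality-free infinitary logic L^-_{infinity infinity}(q), with variables
  of type 'v: a formula is identified with the set of assignments satisfying it.\<close>
inductive_set definable :: "'a operation set \<Rightarrow> ('v \<Rightarrow> 'a) set set"
  for q :: "'a operation set" where
  atom: "\<lbrakk>Rel k R \<in> q; length xs = k\<rbrakk> \<Longrightarrow> {s. map s xs \<in> R} \<in> definable q"
| neg: "D \<in> definable q \<Longrightarrow> - D \<in> definable q"
| conj: "(\<forall>D\<in>S. D \<in> definable q) \<Longrightarrow> \<Inter> S \<in> definable q"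
| ex: "D \<in> definable q \<Longrightarrow>
         {s. \<exists>t. (\<forall>v. v \<notin> W \<longrightarrow> t v = s v) \<and> t \<in> D} \<in> definable q"
| quant: "\<lbrakk>Quant ks Q \<in> q; length Ds = length ks; length xss = length ks;
           \<forall>i<length ks. Ds ! i \<in> definable q \<and> length (xss ! i) = ks ! i \<and> distinct (xss ! i)\<rbrakk>
          \<Longrightarrow> {s. map (\<lambda>i. {as. length as = ks ! i \<and> upd s (xss ! i) as \<in> Ds ! i}) [0..<length ks] \<in> Q}
              \<in> definable q"

text \<open>a ~_q b: no formula phi(x, ybar) distinguishes a and b for any parameters.\<close>
definition sim_eq :: "'v itself \<Rightarrow> 'a operation set \<Rightarrow> 'a \<Rightarrow> 'a \<Rightarrow> bool" where
  "sim_eq (TYPE('v)) q a b \<longleftrightarrow>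
     (\<forall>D \<in> (definable q :: ('v \<Rightarrow> 'a) set set). \<forall>x s. s(x := a) \<in> D \<longleftrightarrow> s(x := b) \<in> D)"

definition quant_inv ::
  "('a \<Rightarrow> 'a \<Rightarrow> bool) \<Rightarrow> ('a \<times> 'a) set \<Rightarrow> nat list \<Rightarrow> 'a list set list set \<Rightarrow> bool" where
  "quant_inv E \<pi> ks Q \<longleftrightarrow>
     (\<forall>Rs Ss. length Rs = length ks \<and> length Ss = length ks \<and>
        (\<forall>i<length ks. Rs ! i \<subseteq> {as. length as = ks ! i} \<and> Ss ! i \<subseteq> {as. length as = ks ! i} \<and>
            invariant E (Rs ! i) \<and> invariant E (Ss ! i) \<and>
            rel_sim (\<lambda>a b. (a, b) \<in> \<pi>) (Rs ! i) (Ss ! i))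
        \<longrightarrow> (Rs \<in> Q \<longleftrightarrow> Ss \<in> Q))"

definition Sim :: "'v itself \<Rightarrow> 'a operation set \<Rightarrow> ('a \<times> 'a) set set" where
  "Sim V q = {\<pi>. similarity \<pi> \<and>
      (\<forall>k R. Rel k R \<in> q \<longrightarrow> invariant (\<lambda>a b. (a, b) \<in> \<pi>) R) \<and>
      (\<forall>ks Q. Quant ks Q \<in> q \<longrightarrow> quant_inv (sim_eq V q) \<pi> ks Q)}"

definition approx :: "('a \<times> 'a) set set \<Rightarrow> ('a \<times> 'a) set" where
  "approx \<Pi> = {(a, b). \<forall>cs. \<exists>\<pi>\<in>\<Pi>. list_all2 (\<lambda>x y. (x, y) \<in> \<pi>) (a # cs) (b # cs)}"

definition full_monoid :: "('a \<times> 'a) set set \<Rightarrow> bool" where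
  "full_monoid \<Pi> \<longleftrightarrow>
     (\<forall>\<pi>\<in>\<Pi>. \<forall>\<sigma>\<in>\<Pi>. \<pi> O \<sigma> \<in> \<Pi>) \<and>
     (\<forall>\<pi>\<in>\<Pi>. \<pi>\<inverse> \<in> \<Pi>) \<and>
     approx \<Pi> \<in> \<Pi> \<and>
     (\<forall>\<pi>\<in>\<Pi>. \<forall>\<pi>'. similarity \<pi>' \<and> \<pi>' \<subseteq> \<pi> \<longrightarrow> \<pi>' \<in> \<Pi>)"

end

theory Submission
  imports Defs
begin

text \<open>Every \<open>\<pi> \<in> Sim q\<close> preserves all definable sets of assignments (induction on formulas:
  totality of \<open>\<pi>\<close> in both directions handles \<open>\<exists>\<close>, and the argument relations of a
  quantifier are \<open>\<sim>\<^sub>q\<close>-invariant), hence it preserves \<open>\<sim>\<^sub>q\<close> itself. Consequently the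
  \<open>\<pi>\<close>-image of a \<open>\<sim>\<^sub>q\<close>-invariant relation is again \<open>\<sim>\<^sub>q\<close>-invariant and interpolates between
  quantifier arguments related by \<open>\<pi> O \<sigma>\<close>; and on \<open>\<sim>\<^sub>q\<close>-invariant arguments, relatedness by a
  subsimilarity of \<open>\<pi>\<close> already implies relatedness by \<open>\<pi>\<close>. Finally \<open>Id \<in> Sim q\<close> makes
  \<open>\<approx>\<close> reflexive, so it relates quantifier arguments only to themselves, while relations
  are shown \<open>\<approx>\<close>-invariant one coordinate at a time.\<close>

abbreviation related :: "('a \<times> 'b) set \<Rightarrow> 'a \<Rightarrow> 'b \<Rightarrow> bool" where
  "related \<pi> \<equiv> \<lambda>a b. (a, b) \<in> \<pi>"

lemma list_all2_related_relcomp: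
  "list_all2 (related (\<pi> O \<sigma>)) = list_all2 (related \<pi>) OO list_all2 (related \<sigma>)"
  by (simp flip: relcompp_relcomp_eq add: list.rel_compp)

lemma list_all2_related_converse:
  "list_all2 (related (\<pi>\<inverse>)) xs ys \<longleftrightarrow> list_all2 (related \<pi>) ys xs"
  by (auto simp: list_all2_conv_all_nth)

lemma list_all2_related_mono:
  "list_all2 (related \<pi>') xs ys \<Longrightarrow> \<pi>' \<subseteq> \<pi> \<Longrightarrow> list_all2 (related \<pi>) xs ys"
  by (erule list_all2_mono) blast

lemma refl_similarity: "refl \<pi> \<Longrightarrow> similarity \<pi>"
  unfolding similarity_def by (blast dest: refl_onD)

lemma similarity_converse: "similarity \<pi> \<Longrightarrow> similarity (\<pi>\<inverse>)"
  by (auto simp: similarity_def)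

lemma similarity_relcomp: "similarity \<pi> \<Longrightarrow> similarity \<sigma> \<Longrightarrow> similarity (\<pi> O \<sigma>)"
  unfolding similarity_def by blast

lemma similarity_ex_left:
  assumes "similarity \<pi>"
  shows "\<exists>xs. list_all2 (related \<pi>) xs ys"
proof -
  obtain f where "\<And>b. (f b, b) \<in> \<pi>" using assms unfolding similarity_def by metis
  then have "list_all2 (related \<pi>) (map f ys) ys" by (simp add: list_all2_map1 list.rel_refl)
  then show ?thesis ..
qed

lemma similarity_ex_right:
  "similarity \<pi> \<Longrightarrow> \<exists>ys. list_all2 (related \<pi>) xs ys"
  using similarity_ex_left[of "\<pi>\<inverse>" xs] similarity_converse list_all2_related_converse by metis

lemma rel_sim_converse: "rel_sim (related (\<pi>\<inverse>)) R S \<longleftrightarrow> rel_sim (related \<pi>) S R"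
  unfolding rel_sim_def list_all2_related_converse by blast

lemma rel_sim_refl_eq:
  assumes "refl \<pi>" "rel_sim (related \<pi>) R S"
  shows "R = S"
proof -
  have "list_all2 (related \<pi>) xs xs" for xs
    using \<open>refl \<pi>\<close> by (simp add: list.rel_refl refl_onD)
  then show ?thesis using assms(2) unfolding rel_sim_def by blast
qed

lemma invariant_relcomp:
  "invariant (related \<pi>) R \<Longrightarrow> invariant (related \<sigma>) R \<Longrightarrow> invariant (related (\<pi> O \<sigma>)) R"
  unfolding invariant_def rel_sim_def list_all2_related_relcomp by blast

lemma invariant_converse: "invariant (related \<pi>) R \<Longrightarrow> invariant (related (\<pi>\<inverse>)) R"
  unfolding invariant_def rel_sim_converse by (simp add: rel_sim_def)

lemma invariant_mono: "invariant (related \<pi>) R \<Longrightarrow> \<pi>' \<subseteq> \<pi> \<Longrightarrow> invariant (related \<pi>') R"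
  unfolding invariant_def rel_sim_def using list_all2_related_mono by blast

lemma invariant_Id: "invariant (related Id) R"
  unfolding invariant_def rel_sim_def by (simp add: list.rel_eq flip: pred_equals_eq2)

definition quant_args_sim ::
  "('a \<Rightarrow> 'a \<Rightarrow> bool) \<Rightarrow> ('a \<times> 'a) set \<Rightarrow> nat list \<Rightarrow> 'a list set list \<Rightarrow> 'a list set list \<Rightarrow> bool"
where
  "quant_args_sim E \<pi> ks Rs Ss \<longleftrightarrow> length Rs = length ks \<and> length Ss = length ks \<and>
     (\<forall>i<length ks. Rs ! i \<subseteq> {as. length as = ks ! i} \<and> Ss ! i \<subseteq> {as. length as = ks ! i} \<and>
        invariant E (Rs ! i) \<and> invariant E (Ss ! i) \<and> rel_sim (related \<pi>) (Rs ! i) (Ss ! i))"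

lemma quant_inv_iff:
  "quant_inv E \<pi> ks Q \<longleftrightarrow> (\<forall>Rs Ss. quant_args_sim E \<pi> ks Rs Ss \<longrightarrow> (Rs \<in> Q \<longleftrightarrow> Ss \<in> Q))"
  by (simp only: quant_inv_def quant_args_sim_def)

lemma quant_args_sim_converse:
  "quant_args_sim E (\<pi>\<inverse>) ks Rs Ss \<longleftrightarrow> quant_args_sim E \<pi> ks Ss Rs"
  unfolding quant_args_sim_def rel_sim_converse by blast

lemma quant_args_sim_refl_eq: "refl \<pi> \<Longrightarrow> quant_args_sim E \<pi> ks Rs Ss \<Longrightarrow> Rs = Ss"
  unfolding quant_args_sim_def by (simp add: nth_equalityI rel_sim_refl_eq)

lemma quant_inv_converse: "quant_inv E \<pi> ks Q \<Longrightarrow> quant_inv E (\<pi>\<inverse>) ks Q"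
  unfolding quant_inv_iff quant_args_sim_converse by blast

lemma quant_inv_refl: "refl \<pi> \<Longrightarrow> quant_inv E \<pi> ks Q"
  unfolding quant_inv_iff using quant_args_sim_refl_eq by blast

lemma quant_inv_antimono:
  assumes "quant_inv E \<pi> ks Q"
    and "\<And>R S. invariant E R \<Longrightarrow> invariant E S \<Longrightarrow> rel_sim (related \<sigma>) R S \<Longrightarrow>
      rel_sim (related \<pi>) R S"
  shows "quant_inv E \<sigma> ks Q"
proof -
  have "quant_args_sim E \<pi> ks Rs Ss" if "quant_args_sim E \<sigma> ks Rs Ss" for Rs Ss
    using that assms(2) by (simp add: quant_args_sim_def)
  then show ?thesis using assms(1) unfolding quant_inv_iff by blast
qed

lemma quant_inv_relcomp:
  assumes "quant_inv E \<pi> ks Q" "quant_inv E \<sigma> ks Q"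
    and interpolant: "\<And>k R S. R \<subseteq> {as. length as = k} \<Longrightarrow> invariant E R \<Longrightarrow>
      rel_sim (related (\<pi> O \<sigma>)) R S \<Longrightarrow>
      \<exists>T \<subseteq> {as. length as = k}. invariant E T \<and> rel_sim (related \<pi>) R T \<and> rel_sim (related \<sigma>) T S"
  shows "quant_inv E (\<pi> O \<sigma>) ks Q"
  unfolding quant_inv_iff
proof (intro allI impI)
  fix Rs Ss assume RS: "quant_args_sim E (\<pi> O \<sigma>) ks Rs Ss"
  have "\<forall>i\<in>{..<length ks}. \<exists>T. T \<subseteq> {as. length as = ks ! i} \<and> invariant E T \<and>
    rel_sim (related \<pi>) (Rs ! i) T \<and> rel_sim (related \<sigma>) T (Ss ! i)"
  proof
    fix i assume "i \<in> {..<length ks}"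
    then show "\<exists>T. T \<subseteq> {as. length as = ks ! i} \<and> invariant E T \<and>
      rel_sim (related \<pi>) (Rs ! i) T \<and> rel_sim (related \<sigma>) T (Ss ! i)"
      using interpolant[of "Rs ! i" "ks ! i" "Ss ! i"] RS by (auto simp: quant_args_sim_def)
  qed
  from bchoice[OF this] obtain T where T: "\<forall>i\<in>{..<length ks}.
    T i \<subseteq> {as. length as = ks ! i} \<and> invariant E (T i) \<and> rel_sim (related \<pi>) (Rs ! i) (T i) \<and> rel_sim (related \<sigma>) (T i) (Ss ! i)"
    ..
  define Ts where "Ts = map T [0..<length ks]"
  have "quant_args_sim E \<pi> ks Rs Ts" "quant_args_sim E \<sigma> ks Ts Ss"
    using RS T by (simp_all add: quant_args_sim_def Ts_def)
  then show "Rs \<in> Q \<longleftrightarrow> Ss \<in> Q" using assms(1,2) unfolding quant_inv_iff by blast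
qed

lemma Sim_similarity: "\<pi> \<in> Sim V q \<Longrightarrow> similarity \<pi>"
  by (simp add: Sim_def)

lemma Sim_converse: "\<pi> \<in> Sim V q \<Longrightarrow> \<pi>\<inverse> \<in> Sim V q"
  unfolding Sim_def mem_Collect_eq
  using similarity_converse invariant_converse quant_inv_converse by blast

lemma Id_in_Sim: "Id \<in> Sim V q"
  unfolding Sim_def mem_Collect_eq
  using invariant_Id quant_inv_refl[OF refl_Id] by (auto simp: similarity_def)

section \<open>Similarities in \<open>Sim q\<close> preserve definable sets\<close>

lemma upd_Cons: "upd s (x # xs) (a # as) = (upd s xs as)(x := a)"
  by (simp add: upd_def)

lemma upd_Nil [simp]: "upd s [] as = s" "upd s xs [] = s"
  by (simp_all add: upd_def)

lemma upd_fun_upd_commute: "x \<notin> set xs \<Longrightarrow> upd (s(x := b)) xs as = (upd s xs as)(x := b)"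
proof (induction xs arbitrary: as)
  case (Cons y ys)
  then show ?case by (cases as) (auto simp: upd_Cons fun_upd_twist)
qed simp

lemma upd_related:
  assumes "\<forall>v. (s v, t v) \<in> \<pi>" "list_all2 (related \<pi>) as bs"
  shows "\<forall>v. (upd s xs as v, upd t xs bs v) \<in> \<pi>"
  using assms(2)
proof (induction xs arbitrary: as bs)
  case (Cons x xs)
  then show ?case using assms(1) by (cases as; cases bs) (auto simp: upd_Cons)
qed (use assms(1) in simp)

lemma upd_sim_eq_iff:
  fixes s :: "'v \<Rightarrow> 'a"
  assumes "D \<in> definable q" "distinct xs" "list_all2 (sim_eq TYPE('v) q) as bs"
  shows "upd s xs as \<in> D \<longleftrightarrow> upd s xs bs \<in> D"
  using assms(2,3)
proof (induction xs arbitrary: s as bs)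
  case (Cons x xs)
  show ?case
  proof (cases as)
    case (Cons a as')
    then obtain b bs' where bs: "bs = b # bs'" "sim_eq TYPE('v) q a b"
        "list_all2 (sim_eq TYPE('v) q) as' bs'"
      using Cons.prems(2) by (auto simp: list_all2_Cons1)
    have x: "x \<notin> set xs" "distinct xs" using Cons.prems(1) by auto
    have "upd s (x # xs) as \<in> D \<longleftrightarrow> (upd s xs as')(x := a) \<in> D"
      using \<open>as = a # as'\<close> by (simp add: upd_Cons)
    also have "\<dots> \<longleftrightarrow> (upd s xs as')(x := b) \<in> D"
      using bs(2) assms(1) by (simp add: sim_eq_def)
    also have "\<dots> \<longleftrightarrow> upd (s(x := b)) xs as' \<in> D"
      by (simp only: upd_fun_upd_commute[OF x(1)])
    also have "\<dots> \<longleftrightarrow> upd (s(x := b)) xs bs' \<in> D"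
      using Cons.IH[OF x(2) bs(3)] .
    also have "\<dots> \<longleftrightarrow> upd s (x # xs) bs \<in> D"
      by (simp only: upd_fun_upd_commute[OF x(1)] bs(1) upd_Cons)
    finally show ?thesis .
  qed (use Cons.prems in simp)
qed simp

lemma exists_block_transfer:
  assumes "similarity \<pi>" "\<forall>v. (s v, t v) \<in> \<pi>"
    and D: "\<forall>s t. (\<forall>v. (s v, t v) \<in> \<pi>) \<longrightarrow> s \<in> D \<longrightarrow> t \<in> D"
    and "s' \<in> D" "\<forall>v. v \<notin> W \<longrightarrow> s' v = s v"
  shows "\<exists>t'. (\<forall>v. v \<notin> W \<longrightarrow> t' v = t v) \<and> t' \<in> D"
proof -
  obtain g where g: "\<And>a. (a, g a) \<in> \<pi>" using assms(1) unfolding similarity_def by metis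
  define t' where "t' v = (if v \<in> W then g (s' v) else t v)" for v
  have "\<forall>v. (s' v, t' v) \<in> \<pi>" using assms(2,5) g by (simp add: t'_def)
  then have "t' \<in> D" using D \<open>s' \<in> D\<close> by blast
  moreover have "\<forall>v. v \<notin> W \<longrightarrow> t' v = t v" by (simp add: t'_def)
  ultimately show ?thesis by blast
qed

lemma invariant_upd_instances:
  fixes D :: "('v \<Rightarrow> 'a) set"
  assumes "D \<in> definable q" "distinct xs"
  shows "invariant (sim_eq TYPE('v) q) {as. length as = k \<and> upd s xs as \<in> D}"
  unfolding invariant_def rel_sim_def
proof (intro allI impI)
  fix as bs assume ab: "list_all2 (sim_eq TYPE('v) q) as bs"
  then show "as \<in> {as. length as = k \<and> upd s xs as \<in> D} \<longleftrightarrow> bs \<in> {as. length as = k \<and> upd s xs as \<in> D}"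
    using upd_sim_eq_iff[OF assms ab] list_all2_lengthD[OF ab] by simp
qed

lemma rel_sim_upd_instances:
  assumes "\<forall>v. (s v, t v) \<in> \<pi>" "\<forall>s t. (\<forall>v. (s v, t v) \<in> \<pi>) \<longrightarrow> (s \<in> D \<longleftrightarrow> t \<in> D)"
  shows "rel_sim (related \<pi>)
    {as. length as = k \<and> upd s xs as \<in> D} {as. length as = k \<and> upd t xs as \<in> D}"
  unfolding rel_sim_def
proof (intro allI impI)
  fix as bs assume ab: "list_all2 (related \<pi>) as bs"
  then have "upd s xs as \<in> D \<longleftrightarrow> upd t xs bs \<in> D" using assms(2) upd_related[OF assms(1)] by blast
  then show "as \<in> {as. length as = k \<and> upd s xs as \<in> D} \<longleftrightarrow> bs \<in> {as. length as = k \<and> upd t xs as \<in> D}"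
    using list_all2_lengthD[OF ab] by simp
qed

lemma Sim_definable_transfer:
  fixes D :: "('v \<Rightarrow> 'a) set"
  assumes "D \<in> definable q" "\<pi> \<in> Sim TYPE('v) q" "\<forall>v. (s v, t v) \<in> \<pi>"
  shows "s \<in> D \<longleftrightarrow> t \<in> D"
proof -
  have "\<forall>s t. (\<forall>v. (s v, t v) \<in> \<pi>) \<longrightarrow> (s \<in> D \<longleftrightarrow> t \<in> D)"
    using assms(1)
  proof induct
    case (atom k R xs)
    then have "invariant (related \<pi>) R" using assms(2) by (auto simp: Sim_def)
    then show ?case by (auto simp: invariant_def rel_sim_def list_all2_conv_all_nth)
  next
    case (ex D W)
    let ?ex = "\<lambda>s. \<exists>t. (\<forall>v. v \<notin> W \<longrightarrow> t v = s v) \<and> t \<in> D"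
    have "similarity \<pi>" "similarity (\<pi>\<inverse>)"
      using Sim_similarity[OF assms(2)] by (simp_all add: similarity_converse)
    moreover have "\<forall>s t. (\<forall>v. (s v, t v) \<in> \<pi>) \<longrightarrow> s \<in> D \<longrightarrow> t \<in> D"
      "\<forall>s t. (\<forall>v. (s v, t v) \<in> \<pi>\<inverse>) \<longrightarrow> s \<in> D \<longrightarrow> t \<in> D"
      using ex.hyps(2) by auto
    ultimately have "?ex s \<Longrightarrow> ?ex t" "?ex t \<Longrightarrow> ?ex s" if "\<forall>v. (s v, t v) \<in> \<pi>" for s t
      using that exists_block_transfer[of \<pi> s t D] exists_block_transfer[of "\<pi>\<inverse>" t s D]
      by auto
    then show ?case by (simp only: mem_Collect_eq) blast
  next
    case (quant ks Q Ds xss)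
    have "quant_inv (sim_eq TYPE('v) q) \<pi> ks Q" using assms(2) quant(1) by (auto simp: Sim_def)
    show ?case
    proof (intro allI impI)
      fix s t :: "'v \<Rightarrow> 'a" assume st: "\<forall>v. (s v, t v) \<in> \<pi>"
      let ?F = "\<lambda>u. map (\<lambda>i. {as. length as = ks ! i \<and> upd u (xss ! i) as \<in> Ds ! i}) [0..<length ks]"
      have "quant_args_sim (sim_eq TYPE('v) q) \<pi> ks (?F s) (?F t)"
        using quant(4) st
        by (auto simp: quant_args_sim_def invariant_upd_instances rel_sim_upd_instances)
      then have "?F s \<in> Q \<longleftrightarrow> ?F t \<in> Q"
        using \<open>quant_inv _ \<pi> ks Q\<close> unfolding quant_inv_iff by blast
      then show "s \<in> {s. ?F s \<in> Q} \<longleftrightarrow> t \<in> {s. ?F s \<in> Q}" by simp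
    qed
  qed blast+
  then show ?thesis using assms(3) by blast
qed

lemma Sim_sim_eq_transfer:
  assumes "\<pi> \<in> Sim TYPE('v) q" "(a, b) \<in> \<pi>" "(a', b') \<in> \<pi>" "sim_eq TYPE('v) q a a'"
  shows "sim_eq TYPE('v) q b b'"
  unfolding sim_eq_def
proof (intro ballI allI)
  fix D :: "('v \<Rightarrow> 'a) set" and x and s :: "'v \<Rightarrow> 'a"
  assume D: "D \<in> definable q"
  obtain f where f: "\<And>c. (f c, c) \<in> \<pi>"
    using Sim_similarity[OF assms(1)] unfolding similarity_def by metis
  have "\<forall>v. (((f \<circ> s)(x := a)) v, (s(x := b)) v) \<in> \<pi>"
    "\<forall>v. (((f \<circ> s)(x := a')) v, (s(x := b')) v) \<in> \<pi>"
    using f assms(2,3) by simp_all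
  then have "s(x := b) \<in> D \<longleftrightarrow> (f \<circ> s)(x := a) \<in> D" "s(x := b') \<in> D \<longleftrightarrow> (f \<circ> s)(x := a') \<in> D"
    using Sim_definable_transfer[OF D assms(1)] by blast+
  moreover have "(f \<circ> s)(x := a) \<in> D \<longleftrightarrow> (f \<circ> s)(x := a') \<in> D"
    using assms(4) D by (simp add: sim_eq_def)
  ultimately show "s(x := b) \<in> D \<longleftrightarrow> s(x := b') \<in> D" by simp
qed

lemma Sim_sim_eq_iff:
  assumes "\<pi> \<in> Sim TYPE('v) q" "(a, b) \<in> \<pi>" "(a', b') \<in> \<pi>"
  shows "sim_eq TYPE('v) q a a' \<longleftrightarrow> sim_eq TYPE('v) q b b'"
  using Sim_sim_eq_transfer[OF assms] Sim_sim_eq_transfer[OF Sim_converse[OF assms(1)]] assms(2,3)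
  by blast

lemma Sim_list_sim_eq_iff:
  assumes "\<pi> \<in> Sim TYPE('v) q" "list_all2 (related \<pi>) as bs" "list_all2 (related \<pi>) as' bs'"
  shows "list_all2 (sim_eq TYPE('v) q) as as' \<longleftrightarrow> list_all2 (sim_eq TYPE('v) q) bs bs'"
proof -
  have "sim_eq TYPE('v) q (as ! i) (as' ! i) \<longleftrightarrow> sim_eq TYPE('v) q (bs ! i) (bs' ! i)"
    if "i < length as" "i < length as'" for i
    using assms(2,3) that Sim_sim_eq_iff[OF assms(1)] by (simp add: list_all2_conv_all_nth)
  moreover have "length bs = length as" "length bs' = length as'"
    using assms(2,3) by (simp_all add: list_all2_lengthD)
  ultimately show ?thesis by (auto simp: list_all2_conv_all_nth)
qed

section \<open>Closure of \<open>Sim\<close> under composition and subsimilarities\<close>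

lemma sim_eq_list_sym:
  "list_all2 (sim_eq TYPE('v) q) as bs \<Longrightarrow> list_all2 (sim_eq TYPE('v) q) bs as"
  by (auto simp: list_all2_conv_all_nth sim_eq_def)

lemma Sim_relcomp_interpolant:
  fixes R S :: "'a list set"
  assumes \<pi>: "\<pi> \<in> Sim TYPE('v) q" and \<sigma>: "\<sigma> \<in> Sim TYPE('v) q"
    and R: "R \<subseteq> {as. length as = k}" "invariant (sim_eq TYPE('v) q) R"
    and RS: "rel_sim (related (\<pi> O \<sigma>)) R S"
  shows "\<exists>T \<subseteq> {as. length as = k}. invariant (sim_eq TYPE('v) q) T \<and>
    rel_sim (related \<pi>) R T \<and> rel_sim (related \<sigma>) T S"
proof -
  define T where "T = {zs. \<exists>xs\<in>R. list_all2 (related \<pi>) xs zs}"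
  have via: "xs \<in> R \<longleftrightarrow> ys \<in> S"
    if "list_all2 (related \<pi>) xs zs" "list_all2 (related \<sigma>) zs ys" for xs zs ys
    using RS that unfolding rel_sim_def list_all2_related_relcomp by blast
  have closed: "zs' \<in> T" if "list_all2 (sim_eq TYPE('v) q) zs zs'" "zs \<in> T" for zs zs'
  proof -
    obtain xs where xs: "xs \<in> R" "list_all2 (related \<pi>) xs zs" using \<open>zs \<in> T\<close> by (auto simp: T_def)
    obtain xs' where xs': "list_all2 (related \<pi>) xs' zs'"
      using similarity_ex_left[OF Sim_similarity[OF \<pi>]] by blast
    have "list_all2 (sim_eq TYPE('v) q) xs xs'"
      using Sim_list_sim_eq_iff[OF \<pi> xs(2) xs'] that(1) by blast
    then have "xs' \<in> R" using R(2) xs(1) by (auto simp: invariant_def rel_sim_def)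
    then show ?thesis using xs' by (auto simp: T_def)
  qed
  have "T \<subseteq> {as. length as = k}"
    using R(1) list_all2_lengthD by (fastforce simp: T_def)
  moreover have "invariant (sim_eq TYPE('v) q) T"
    unfolding invariant_def rel_sim_def using closed sim_eq_list_sym by blast
  moreover have "rel_sim (related \<pi>) R T"
    unfolding rel_sim_def
  proof (intro allI impI iffI)
    fix xs zs assume "list_all2 (related \<pi>) xs zs" "xs \<in> R"
    then show "zs \<in> T" by (auto simp: T_def)
  next
    fix xs zs assume xs: "list_all2 (related \<pi>) xs zs" and "zs \<in> T"
    then obtain xs' where xs': "xs' \<in> R" "list_all2 (related \<pi>) xs' zs" by (auto simp: T_def)
    obtain ys where "list_all2 (related \<sigma>) zs ys"
      using similarity_ex_right[OF Sim_similarity[OF \<sigma>]] by blast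
    then show "xs \<in> R" using via xs xs' by blast
  qed
  moreover have "rel_sim (related \<sigma>) T S"
    unfolding rel_sim_def
  proof (intro allI impI)
    fix zs ys assume zs: "list_all2 (related \<sigma>) zs ys"
    obtain xs where "list_all2 (related \<pi>) xs zs"
      using similarity_ex_left[OF Sim_similarity[OF \<pi>]] by blast
    then show "zs \<in> T \<longleftrightarrow> ys \<in> S" using via zs by (auto simp: T_def)
  qed
  ultimately show ?thesis by blast
qed

lemma Sim_relcomp:
  assumes "\<pi> \<in> Sim TYPE('v) q" "\<sigma> \<in> Sim TYPE('v) q"
  shows "\<pi> O \<sigma> \<in> Sim TYPE('v) q"
  unfolding Sim_def mem_Collect_eq
proof (intro conjI allI impI)
  show "similarity (\<pi> O \<sigma>)" using assms by (simp add: Sim_similarity similarity_relcomp)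
next
  fix k R assume "Rel k R \<in> q"
  then show "invariant (related (\<pi> O \<sigma>)) R" using assms by (simp add: Sim_def invariant_relcomp)
next
  fix ks Q assume "Quant ks Q \<in> q"
  then show "quant_inv (sim_eq TYPE('v) q) (\<pi> O \<sigma>) ks Q"
    using assms quant_inv_relcomp[OF _ _ Sim_relcomp_interpolant[OF assms]] by (simp add: Sim_def)
qed

lemma rel_sim_subsimilarity:
  assumes \<pi>: "\<pi> \<in> Sim TYPE('v) q" and "similarity \<pi>'" "\<pi>' \<subseteq> \<pi>"
    and S: "invariant (sim_eq TYPE('v) q) S" and R'S: "rel_sim (related \<pi>') R S"
  shows "rel_sim (related \<pi>) R S"
  unfolding rel_sim_def
proof (intro allI impI)
  fix xs ys assume xs: "list_all2 (related \<pi>) xs ys"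
  obtain ys' where ys': "list_all2 (related \<pi>') xs ys'"
    using similarity_ex_right[OF \<open>similarity \<pi>'\<close>] by blast
  have "list_all2 (sim_eq TYPE('v) q) xs xs" by (simp add: list.rel_refl sim_eq_def)
  then have "list_all2 (sim_eq TYPE('v) q) ys' ys"
    using Sim_list_sim_eq_iff[OF \<pi> list_all2_related_mono[OF ys' \<open>\<pi>' \<subseteq> \<pi>\<close>] xs] by blast
  then show "xs \<in> R \<longleftrightarrow> ys \<in> S"
    using R'S ys' S by (auto simp: rel_sim_def invariant_def)
qed

lemma Sim_subsimilarity:
  assumes "\<pi> \<in> Sim TYPE('v) q" "similarity \<pi>'" "\<pi>' \<subseteq> \<pi>"
  shows "\<pi>' \<in> Sim TYPE('v) q"
  unfolding Sim_def mem_Collect_eq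
proof (intro conjI allI impI)
  fix k R assume "Rel k R \<in> q"
  with assms(1) have "invariant (related \<pi>) R" by (simp add: Sim_def)
  then show "invariant (related \<pi>') R" using assms(3) by (rule invariant_mono)
next
  fix ks Q assume "Quant ks Q \<in> q"
  then show "quant_inv (sim_eq TYPE('v) q) \<pi>' ks Q"
    using assms quant_inv_antimono[OF _ rel_sim_subsimilarity[OF assms]] by (simp add: Sim_def)
qed (rule assms(2))

lemma approx_refl: "Id \<in> \<Pi> \<Longrightarrow> refl (approx \<Pi>)"
  unfolding approx_def by (auto intro!: refl_onI bexI[of _ Id] simp: list.rel_refl)

lemma invariant_approx_append:
  assumes inv: "\<forall>\<pi>\<in>\<Pi>. invariant (related \<pi>) R"
    and "list_all2 (related (approx \<Pi>)) xs ys"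
  shows "us @ xs \<in> R \<longleftrightarrow> us @ ys \<in> R"
  using assms(2)
proof (induction arbitrary: us rule: list_all2_induct)
  \<comment> \<open>\<open>x \<approx> y\<close> holds uniformly in the parameters, here \<open>us @ xs\<close>; then move on to the next coordinate\<close>
  case (Cons x xs y ys)
  obtain \<pi> where \<pi>: "\<pi> \<in> \<Pi>" "list_all2 (related \<pi>) (x # us @ xs) (y # us @ xs)"
    using Cons.hyps(1) unfolding approx_def by blast
  then have "list_all2 (related \<pi>) (us @ x # xs) (us @ y # xs)"
    by (auto simp: list_all2_append)
  then have "us @ x # xs \<in> R \<longleftrightarrow> us @ y # xs \<in> R"
    using inv \<pi>(1) by (auto simp: invariant_def rel_sim_def)
  also have "\<dots> \<longleftrightarrow> us @ y # ys \<in> R" using Cons.IH[of "us @ [y]"] by simp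
  finally show ?case .
qed simp

lemma invariant_approx:
  "\<forall>\<pi>\<in>\<Pi>. invariant (related \<pi>) R \<Longrightarrow> invariant (related (approx \<Pi>)) R"
  using invariant_approx_append[of \<Pi> R _ _ "[]"] by (simp add: invariant_def rel_sim_def)

lemma approx_Sim: "approx (Sim TYPE('v) q) \<in> Sim TYPE('v) q"
proof -
  let ?A = "approx (Sim TYPE('v) q)"
  have "refl ?A" using approx_refl[OF Id_in_Sim] .
  moreover have "invariant (related ?A) R" if "Rel k R \<in> q" for k R
    using that by (intro invariant_approx) (simp add: Sim_def)
  ultimately show ?thesis using quant_inv_refl[OF \<open>refl ?A\<close>] by (simp add: Sim_def refl_similarity)
qed

theorem lemma16:
  fixes q :: "'a operation set"
  assumes "ops_wf q"
  shows "full_monoid (Sim TYPE('v) q)"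
  unfolding full_monoid_def
  using Sim_relcomp Sim_converse approx_Sim Sim_subsimilarity by blast

end
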